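(* Let $\Bbbk$ be a field with $\mathrm{char}(\Bbbk)\neq2$, and let $\xi,\gamma\in\Bbbk$. Let $K=T_2(-1)$ be the Sweedler Hopf algebra with $\mathcal{R}$-matrix $\mathcal{R}_\xi$, $\mathcal{B}=K\text{-}\mathbf{Mod}$, and $A_\gamma=\Bbbk[u]$ the algebra in $\mathcal{B}$ described in the context. Then the $\mathcal{B}$-center of $A_\gamma$ (for $\mathcal{C}=\Bbbk\text{-}\mathbf{Mod}(\mathcal{B})\cong\mathcal{B}$) equals its left center: $$Z_{\mathcal{B}}(A_\gamma)=C^l(A_\gamma)=\Bbbk[u^2],\qquad g\cdot u^2=u^2,\quad x\cdot u^2=0,$$ as a commutative algebra in $\mathcal{B}\cong\mathcal{Z}_{\mathcal{B}}(\mathcal{C})$, independently of $\xi$ and $\gamma$.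
   Context: $T_2(-1)=\Bbbk\langle g,x\rangle/(g^2-1,x^2,gx+xg)$ with $g$ group-like and $\Delta(x)=g\otimes x+x\otimes1$; it is quasi-triangular with $\mathcal{R}_\xi=\frac12(1\otimes1+1\otimes g+g\otimes1-g\otimes g)+\frac\xi2(x\otimes x+x\otimes gx+gx\otimes gx-gx\otimes x)$. $\mathcal{B}=K\text{-}\mathbf{Mod}$ with braiding $\Psi(v\otimes w)=(\mathcal{R}_\xi^{(2)}\cdot w)\otimes(\mathcal{R}_\xi^{(1)}\cdot v)$. $A_\gamma=\Bbbk[u]$ is the $K$-module algebra with $g\cdot u=-u$, $x\cdot u=\gamma$ (action extended to products by the module algebra rule). Taking $H=\Bbbk$, $\mathcal{C}=\Bbbk\text{-}\mathbf{Mod}(\mathcal{B})$ is identified with $\mathcal{B}$ and its relative center $\mathcal{Z}_{\mathcal{B}}(\mathcal{C})$ with $\mathcal{B}$ (half-braidings given by $\Psi$). The $\mathcal{B}$-center of an algebra $(A,m)$ is the terminal object among pairs $(Z,\zeta\colon Z\to A)$ with $m(\zeta\otimes\mathrm{Id})=m(\mathrm{Id}\otimes\zeta)\Psi_{Z,A}$; the left center $C^l(A)$ is the largest subobject $C\subseteq A$ with $m\Psi_{C,A}=m$ on $C\otimes A$. *)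

theory Defs
  imports "HOL-Computational_Algebra.Polynomial"
begin

text \<open>The Sweedler Hopf algebra K = T_2(-1) is presented by generators g, x with
 g^2 = 1, x^2 = 0, gx + xg = 0.  A (left) K-module over the field 'a is therefore a
 'a-vector space together with two linear endomorphisms G (action of g) and X (action of x)
 satisfying these relations.\<close>

definition K_module :: "('a::field \<Rightarrow> 'z::ab_group_add \<Rightarrow> 'z) \<Rightarrow> ('z \<Rightarrow> 'z) \<Rightarrow> ('z \<Rightarrow> 'z) \<Rightarrow> bool" where
  "K_module sc G X \<longleftrightarrow> vector_space sc \<and> Vector_Spaces.linear sc sc G \<and> Vector_Spaces.linear sc sc X
     \<and> (\<forall>z. G (G z) = z) \<and> (\<forall>z. X (X z) = 0) \<and> (\<forall>z. G (X z) + X (G z) = 0)"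

definition K_hom_to_poly :: "('a::field \<Rightarrow> 'z::ab_group_add \<Rightarrow> 'z) \<Rightarrow> ('z \<Rightarrow> 'z) \<Rightarrow> ('z \<Rightarrow> 'z)
   \<Rightarrow> ('a poly \<Rightarrow> 'a poly) \<Rightarrow> ('a poly \<Rightarrow> 'a poly) \<Rightarrow> ('z \<Rightarrow> 'a poly) \<Rightarrow> bool" where
  "K_hom_to_poly sc GZ XZ G X f \<longleftrightarrow> Vector_Spaces.linear sc smult f
     \<and> (\<forall>z. f (GZ z) = G (f z)) \<and> (\<forall>z. f (XZ z) = X (f z))"

text \<open>A_gamma = k[u] as a K-module algebra: g.u = -u, x.u = gamma, action extended to products
 by the module algebra rule  h.(ab) = (h_(1).a)(h_(2).b), h.1 = eps(h) 1, with
 Delta(g) = g\<otimes>g, Delta(x) = g\<otimes>x + x\<otimes>1, eps(g)=1, eps(x)=0.\<close>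
definition A_gamma_action :: "'a::field \<Rightarrow> ('a poly \<Rightarrow> 'a poly) \<Rightarrow> ('a poly \<Rightarrow> 'a poly) \<Rightarrow> bool" where
  "A_gamma_action \<gamma> G X \<longleftrightarrow> Vector_Spaces.linear smult smult G \<and> Vector_Spaces.linear smult smult X
     \<and> G [:0, 1:] = [:0, -1:] \<and> X [:0, 1:] = [:\<gamma>:]
     \<and> G 1 = 1 \<and> X 1 = 0
     \<and> (\<forall>p q. G (p * q) = G p * G q)
     \<and> (\<forall>p q. X (p * q) = G p * X q + X p * q)"

definition K_submodule :: "('a::field poly \<Rightarrow> 'a poly) \<Rightarrow> ('a poly \<Rightarrow> 'a poly) \<Rightarrow> 'a poly set \<Rightarrow> bool" where
  "K_submodule G X C \<longleftrightarrow> 0 \<in> C \<and> (\<forall>p\<in>C. \<forall>q\<in>C. p + q \<in> C) \<and> (\<forall>c. \<forall>p\<in>C. smult c p \<in> C)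
     \<and> (\<forall>p\<in>C. G p \<in> C) \<and> (\<forall>p\<in>C. X p \<in> C)"

text \<open>m (Id \<otimes> zeta) Psi_{Z,A} (z \<otimes> a) = sum_i (R_i^(2).a) zeta(R_i^(1).z), where
 R_xi = 1/2(1\<otimes>1 + 1\<otimes>g + g\<otimes>1 - g\<otimes>g) + xi/2(x\<otimes>x + x\<otimes>gx + gx\<otimes>gx - gx\<otimes>x).\<close>
definition mPsi :: "'a::field \<Rightarrow> ('a poly \<Rightarrow> 'a poly) \<Rightarrow> ('a poly \<Rightarrow> 'a poly)
    \<Rightarrow> ('z \<Rightarrow> 'z) \<Rightarrow> ('z \<Rightarrow> 'z) \<Rightarrow> ('z \<Rightarrow> 'a poly) \<Rightarrow> 'z \<Rightarrow> 'a poly \<Rightarrow> 'a poly" where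
  "mPsi \<xi> G X GZ XZ \<zeta> z a =
     smult (1/2) (a * \<zeta> z + G a * \<zeta> z + a * \<zeta> (GZ z) - G a * \<zeta> (GZ z))
   + smult (\<xi>/2) (X a * \<zeta> (XZ z) + G (X a) * \<zeta> (XZ z)
                  + G (X a) * \<zeta> (GZ (XZ z)) - X a * \<zeta> (GZ (XZ z)))"

text \<open>The defining condition m(zeta \<otimes> Id) = m(Id \<otimes> zeta) Psi_{Z,A}, checked on pure tensors
 z \<otimes> a with z ranging over the carrier Z.\<close>
definition braided_central :: "'a::field \<Rightarrow> ('a poly \<Rightarrow> 'a poly) \<Rightarrow> ('a poly \<Rightarrow> 'a poly)
    \<Rightarrow> 'z set \<Rightarrow> ('z \<Rightarrow> 'z) \<Rightarrow> ('z \<Rightarrow> 'z) \<Rightarrow> ('z \<Rightarrow> 'a poly) \<Rightarrow> bool" where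
  "braided_central \<xi> G X Z GZ XZ \<zeta> \<longleftrightarrow> (\<forall>z\<in>Z. \<forall>a. \<zeta> z * a = mPsi \<xi> G X GZ XZ \<zeta> z a)"

definition is_left_center :: "'a::field \<Rightarrow> ('a poly \<Rightarrow> 'a poly) \<Rightarrow> ('a poly \<Rightarrow> 'a poly) \<Rightarrow> 'a poly set \<Rightarrow> bool" where
  "is_left_center \<xi> G X C \<longleftrightarrow>
     K_submodule G X C \<and> braided_central \<xi> G X C G X id
     \<and> (\<forall>C'. K_submodule G X C' \<and> braided_central \<xi> G X C' G X id \<longrightarrow> C' \<subseteq> C)"

definition even_part :: "'a::field poly set" where
  "even_part = {pcompose q [:0, 0, 1:] | q. True}"

end

theory Submission
  imports Defs
begin

text \<open>Every polynomial splits as \<open>A + u B\<close> with \<open>A, B \<in> k[u\<^sup>2]\<close>; since \<open>u\<^sup>2\<close> is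
  \<open>g\<close>-invariant and killed by \<open>x\<close>, so is all of \<open>k[u\<^sup>2]\<close>, and then \<open>g\<close> acts by
  \<open>A + u B \<mapsto> A - u B\<close> while \<open>x\<close> acts by \<open>A + u B \<mapsto> \<gamma> B\<close>.  Testing the centrality
  condition of a K-linear \<open>\<zeta>\<close> against \<open>a = u\<close> gives \<open>p u = u (g\<cdot>p) + \<xi>\<gamma> (x\<cdot>p)\<close> for every
  \<open>p\<close> in the image of \<open>\<zeta>\<close>, i.e. \<open>(2u\<^sup>2 - \<xi>\<gamma>\<^sup>2) B = 0\<close>, so \<open>B = 0\<close> because \<open>2 \<noteq> 0\<close>.
  Conversely, for \<open>g\<close>-invariant elements killed by \<open>x\<close> the braiding with any \<open>a\<close> reduces to
  the flip, so \<open>k[u\<^sup>2]\<close> is central.\<close>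

lemma smult_half_double:
  fixes c :: "'a::field" and w :: "'a poly"
  assumes "(2::'a) \<noteq> 0"
  shows "smult (c / 2) (w + w) = smult c w"
proof -
  have "c / 2 + c / 2 = c"
    using assms by (simp add: field_simps)
  then show ?thesis
    by (metis smult_add_left smult_add_right)
qed

lemma pcompose_in_even_part: "pcompose q [:0, 0, 1:] \<in> even_part"
  unfolding even_part_def by blast

lemma even_partE:
  assumes "p \<in> even_part"
  obtains q where "p = pcompose q [:0, 0, 1:]"
  using assms unfolding even_part_def by blast

lemma zero_in_even_part: "0 \<in> even_part"
  using pcompose_in_even_part[of 0] by simp

lemma one_in_even_part: "1 \<in> even_part"
  using pcompose_in_even_part[of 1] by (simp only: pcompose_1)

lemma even_part_add: "p \<in> even_part \<Longrightarrow> q \<in> even_part \<Longrightarrow> p + q \<in> even_part"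
  by (elim even_partE) (simp only: pcompose_add[symmetric] pcompose_in_even_part)

lemma even_part_mult: "p \<in> even_part \<Longrightarrow> q \<in> even_part \<Longrightarrow> p * q \<in> even_part"
  by (elim even_partE) (simp only: pcompose_mult[symmetric] pcompose_in_even_part)

lemma even_part_smult: "p \<in> even_part \<Longrightarrow> smult c p \<in> even_part"
  by (elim even_partE) (simp only: pcompose_smult[symmetric] pcompose_in_even_part)

lemma even_odd_decomposition:
  fixes p :: "'a::field poly"
  obtains A B where "A \<in> even_part" "B \<in> even_part" "p = A + [:0, 1:] * B"
proof -
  have "\<exists>a b. p = pcompose a [:0, 0, 1:] + [:0, 1:] * pcompose b [:0, 0, 1:]"
  proof (induction p)
    case 0
    show ?case by (intro exI[of _ 0]) simp
  next
    case (pCons c q)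
    then obtain a b where q: "q = pcompose a [:0, 0, 1:] + [:0, 1:] * pcompose b [:0, 0, 1:]"
      by blast
    have "pCons c q = pcompose (pCons c b) [:0, 0, 1:] + [:0, 1:] * pcompose a [:0, 0, 1:]"
      unfolding q pcompose_pCons by (simp add: pCons_eq_iff algebra_simps)
    then show ?case by blast
  qed
  then show thesis
    using that pcompose_in_even_part by blast
qed

lemma A_gamma_action_linear:
  assumes "A_gamma_action \<gamma> G X"
  shows "G 0 = 0" "G (p + q) = G p + G q" "G (smult c p) = smult c (G p)"
    and "X 0 = 0" "X (p + q) = X p + X q" "X (smult c p) = smult c (X p)"
    and "G [:c:] = [:c:]" "X [:c:] = 0"
proof -
  have "Vector_Spaces.linear smult smult G" "Vector_Spaces.linear smult smult X"
    using assms unfolding A_gamma_action_def by auto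
  then have G: "module_hom smult smult G" and X: "module_hom smult smult X"
    unfolding Vector_Spaces.linear_iff_module_hom .
  show "G 0 = 0" "G (p + q) = G p + G q" "G (smult c p) = smult c (G p)"
    "X 0 = 0" "X (p + q) = X p + X q" "X (smult c p) = smult c (X p)"
    using module_hom.zero[OF G] module_hom.add[OF G] module_hom.scale[OF G]
      module_hom.zero[OF X] module_hom.add[OF X] module_hom.scale[OF X] by simp_all
  have "G 1 = 1" "X 1 = 0"
    using assms unfolding A_gamma_action_def by auto
  then show "G [:c:] = [:c:]" "X [:c:] = 0"
    using module_hom.scale[OF G, of c 1] module_hom.scale[OF X, of c 1] by simp_all
qed

lemma A_gamma_action_mult:
  assumes "A_gamma_action \<gamma> G X"
  shows "G (p * q) = G p * G q" "X (p * q) = G p * X q + X p * q"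
    and "G [:0, 1:] = [:0, -1:]" "X [:0, 1:] = [:\<gamma>:]"
  using assms unfolding A_gamma_action_def by auto

lemma A_gamma_action_u_squared:
  assumes "A_gamma_action \<gamma> G X"
  shows "G [:0, 0, 1:] = [:0, 0, 1:]" "X [:0, 0, 1:] = 0"
proof -
  have u2: "[:0, 0, 1:] = [:0, 1:] * ([:0, 1:] :: 'a poly)" by simp
  show "G [:0, 0, 1:] = [:0, 0, 1:]" "X [:0, 0, 1:] = 0"
    unfolding u2 A_gamma_action_mult[OF assms] by simp_all
qed

lemma A_gamma_action_even_part:
  assumes act: "A_gamma_action \<gamma> G X" and "p \<in> even_part"
  shows "G p = p" "X p = 0"
proof -
  have "G (pcompose q [:0, 0, 1:]) = pcompose q [:0, 0, 1:] \<and> X (pcompose q [:0, 0, 1:]) = 0" for q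
  proof (induction q)
    case (pCons c q)
    then show ?case
      unfolding pcompose_pCons A_gamma_action_linear[OF act] A_gamma_action_mult[OF act]
        A_gamma_action_u_squared[OF act] by simp
  qed (simp add: A_gamma_action_linear[OF act])
  with \<open>p \<in> even_part\<close> show "G p = p" "X p = 0"
    by (auto elim: even_partE)
qed

lemma A_gamma_action_even_odd:
  assumes act: "A_gamma_action \<gamma> G X" and "A \<in> even_part" "B \<in> even_part"
  shows "G (A + [:0, 1:] * B) = A - [:0, 1:] * B" "X (A + [:0, 1:] * B) = smult \<gamma> B"
proof -
  have "G (A + [:0, 1:] * B) = A + [:0, -1:] * B" "X (A + [:0, 1:] * B) = [:\<gamma>:] * B"
    using assms by (simp_all only: A_gamma_action_linear[OF act] A_gamma_action_mult[OF act]
        A_gamma_action_even_part[OF act] mult_zero_right add_0_left add_0_right)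
  then show "G (A + [:0, 1:] * B) = A - [:0, 1:] * B" "X (A + [:0, 1:] * B) = smult \<gamma> B"
    by simp_all
qed

lemma mPsi_at_u:
  assumes act: "A_gamma_action (\<gamma>::'a::field) G X" and char: "(2::'a) \<noteq> 0"
  shows "mPsi \<xi> G X GZ XZ \<zeta> z [:0, 1:] = [:0, 1:] * \<zeta> (GZ z) + smult (\<xi> * \<gamma>) (\<zeta> (XZ z))"
proof -
  have "mPsi \<xi> G X GZ XZ \<zeta> z [:0, 1:]
      = smult (1 / 2) ([:0, 1:] * \<zeta> (GZ z) + [:0, 1:] * \<zeta> (GZ z))
        + smult (\<xi> / 2) (smult \<gamma> (\<zeta> (XZ z)) + smult \<gamma> (\<zeta> (XZ z)))"
    unfolding mPsi_def A_gamma_action_mult[OF act] A_gamma_action_linear[OF act]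
    by (simp add: algebra_simps)
  then show ?thesis
    by (simp only: smult_half_double[OF char]) (simp add: mult.commute)
qed

lemma mPsi_id_of_invariant:
  assumes act: "A_gamma_action (\<gamma>::'a::field) G X" and char: "(2::'a) \<noteq> 0"
    and "G z = z" "X z = 0"
  shows "mPsi \<xi> G X G X id z a = z * a"
proof -
  have "mPsi \<xi> G X G X id z a = smult (1 / 2) (z * a + z * a)"
    using assms(3,4) unfolding mPsi_def by (simp add: A_gamma_action_linear[OF act] algebra_simps)
  also have "\<dots> = z * a"
    using smult_half_double[OF char, of 1 "z * a"] by (simp only: smult_1_left)
  finally show ?thesis .
qed

lemma commutes_with_u_imp_even_part:
  assumes act: "A_gamma_action (\<gamma>::'a::field) G X" and char: "(2::'a) \<noteq> 0"
    and comm: "p * [:0, 1:] = [:0, 1:] * G p + smult (\<xi> * \<gamma>) (X p)"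
  shows "p \<in> even_part"
proof -
  obtain A B where AB: "A \<in> even_part" "B \<in> even_part" and p: "p = A + [:0, 1:] * B"
    by (rule even_odd_decomposition)
  have sides_difference: "2 * (u * u) * B - smult c B = (A + u * B) * u - (u * (A - u * B) + smult c B)"
    for u :: "'a poly" and c :: 'a
    by (simp add: algebra_simps mult_2)
  have comm_AB:
    "(A + [:0, 1:] * B) * [:0, 1:] = [:0, 1:] * (A - [:0, 1:] * B) + smult (\<xi> * \<gamma> * \<gamma>) B"
    using comm unfolding p A_gamma_action_even_odd[OF act AB] smult_smult .
  have "[:- (\<xi> * \<gamma> * \<gamma>), 0, 2:] * B = 2 * ([:0, 1:] * [:0, 1:]) * B - smult (\<xi> * \<gamma> * \<gamma>) B"
    by (simp add: numeral_mult_conv_smult)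
  also have "\<dots> = 0"
    unfolding sides_difference comm_AB by simp
  finally have "[:- (\<xi> * \<gamma> * \<gamma>), 0, 2:] * B = 0" .
  moreover have "[:- (\<xi> * \<gamma> * \<gamma>), 0, 2:] \<noteq> 0"
    using char by simp
  ultimately have "B = 0"
    by (metis mult_eq_0_iff)
  with p AB show ?thesis
    by simp
qed

lemma braided_central_imp_even_part:
  assumes act: "A_gamma_action (\<gamma>::'a::field) G X" and char: "(2::'a) \<noteq> 0"
    and central: "braided_central \<xi> G X Z GZ XZ \<zeta>" and "z \<in> Z"
    and hom: "\<zeta> (GZ z) = G (\<zeta> z)" "\<zeta> (XZ z) = X (\<zeta> z)"
  shows "\<zeta> z \<in> even_part"
proof (rule commutes_with_u_imp_even_part[OF act char])
  have "\<zeta> z * [:0, 1:] = mPsi \<xi> G X GZ XZ \<zeta> z [:0, 1:]"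
    using central \<open>z \<in> Z\<close> unfolding braided_central_def by blast
  then show "\<zeta> z * [:0, 1:] = [:0, 1:] * G (\<zeta> z) + smult (\<xi> * \<gamma>) (X (\<zeta> z))"
    unfolding mPsi_at_u[OF act char] hom .
qed

lemma K_submodule_even_part:
  assumes act: "A_gamma_action \<gamma> G X"
  shows "K_submodule G X even_part"
  unfolding K_submodule_def
  using A_gamma_action_even_part[OF act] zero_in_even_part even_part_add even_part_smult
  by auto

lemma braided_central_even_part:
  assumes act: "A_gamma_action (\<gamma>::'a::field) G X" and char: "(2::'a) \<noteq> 0"
  shows "braided_central \<xi> G X even_part G X id"
  unfolding braided_central_def
  using mPsi_id_of_invariant[OF act char] A_gamma_action_even_part[OF act] by simp

lemma is_left_center_even_part:
  assumes act: "A_gamma_action (\<gamma>::'a::field) G X" and char: "(2::'a) \<noteq> 0"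
  shows "is_left_center \<xi> G X even_part"
  unfolding is_left_center_def
proof (intro conjI allI impI subsetI
    K_submodule_even_part[OF act] braided_central_even_part[OF act char])
  fix C p
  assume "K_submodule G X C \<and> braided_central \<xi> G X C G X id" and "p \<in> C"
  then show "p \<in> even_part"
    using braided_central_imp_even_part[OF act char,
        where \<xi> = \<xi> and Z = C and GZ = G and XZ = X and \<zeta> = id and z = p]
    by simp
qed

lemma braided_central_factors_through_even_part:
  assumes act: "A_gamma_action (\<gamma>::'a::field) G X" and char: "(2::'a) \<noteq> 0"
    and hom: "K_hom_to_poly sc GZ XZ G X \<zeta>" and central: "braided_central \<xi> G X UNIV GZ XZ \<zeta>"
  shows "\<exists>!f. (\<forall>z. f z \<in> even_part) \<and> K_hom_to_poly sc GZ XZ G X f \<and> (\<forall>z. id (f z) = \<zeta> z)"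
proof (rule ex1I[of _ \<zeta>])
  have "\<zeta> z \<in> even_part" for z
    using braided_central_imp_even_part[OF act char central] hom
    unfolding K_hom_to_poly_def by simp
  with hom show "(\<forall>z. \<zeta> z \<in> even_part) \<and> K_hom_to_poly sc GZ XZ G X \<zeta> \<and> (\<forall>z. id (\<zeta> z) = \<zeta> z)"
    by simp
qed (simp add: fun_eq_iff)

theorem proposition7p2:
  fixes \<xi> \<gamma> :: "'a::field"
    and G X :: "'a poly \<Rightarrow> 'a poly"
  assumes char: "(2::'a) \<noteq> 0"
    and act: "A_gamma_action \<gamma> G X"
  shows
    \<comment> \<open>B-center: (k[u^2], inclusion) is an object of the category of pairs and is terminal\<close>
    "(K_submodule G X even_part \<and> braided_central \<xi> G X even_part G X id
      \<and> (\<forall>(sc :: 'a \<Rightarrow> 'z::ab_group_add \<Rightarrow> 'z) GZ XZ \<zeta>.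
           K_module sc GZ XZ \<and> K_hom_to_poly sc GZ XZ G X \<zeta> \<and> braided_central \<xi> G X UNIV GZ XZ \<zeta>
           \<longrightarrow> (\<exists>!f. (\<forall>z. f z \<in> even_part) \<and> K_hom_to_poly sc GZ XZ G X f \<and> (\<forall>z. id (f z) = \<zeta> z))))
     \<comment> \<open>left center\<close>
     \<and> is_left_center \<xi> G X even_part
     \<comment> \<open>algebra structure and action\<close>
     \<and> (1::'a poly) \<in> even_part \<and> (\<forall>p::'a poly\<in>even_part. \<forall>q\<in>even_part. p * q \<in> even_part)
     \<and> G [:0, 0, 1:] = [:0, 0, 1:] \<and> X [:0, 0, 1:] = 0"
  using K_submodule_even_part[OF act] braided_central_even_part[OF act char]
    braided_central_factors_through_even_part[OF act char] is_left_center_even_part[OF act char]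
    one_in_even_part even_part_mult A_gamma_action_u_squared[OF act]
  by blast

end
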